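(* Let $\mathcal{P}$ be a minimum path cover of a tree $T$ and let $e=xy$ be a connector edge of $\mathcal{P}$. Then at least one of $x,y$ is an interior connector vertex.
   Context: A path cover of a tree $T$ is a set of vertex-disjoint paths of $T$ (a single vertex counts as a path) that together cover all vertices of $T$; it is minimum if no path cover has fewer paths. For a path cover $\mathcal{P}$, an edge $xy$ of $T$ with $x,y$ in different paths of $\mathcal{P}$ is a connector edge, and $x,y$ are connector vertices; a connector vertex is interior if it is an interior (non-end) vertex of the path of $\mathcal{P}$ containing it. *)

theory Defs
  imports Main
begin

definition graph :: "'a set \<Rightarrow> 'a set set \<Rightarrow> bool" where
  "graph V E \<longleftrightarrow> finite V \<and> (\<forall>e\<in>E. \<exists>u v. e = {u, v} \<and> u \<noteq> v \<and> u \<in> V \<and> v \<in> V)"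

definition is_path :: "'a set \<Rightarrow> 'a set set \<Rightarrow> 'a list \<Rightarrow> bool" where
  "is_path V E xs \<longleftrightarrow> xs \<noteq> [] \<and> distinct xs \<and> set xs \<subseteq> V \<and>
     (\<forall>i. Suc i < length xs \<longrightarrow> {xs ! i, xs ! Suc i} \<in> E)"

definition connected :: "'a set \<Rightarrow> 'a set set \<Rightarrow> bool" where
  "connected V E \<longleftrightarrow> (\<forall>u\<in>V. \<forall>v\<in>V. \<exists>xs. is_path V E xs \<and> hd xs = u \<and> last xs = v)"

definition is_cycle :: "'a set \<Rightarrow> 'a set set \<Rightarrow> 'a list \<Rightarrow> bool" where
  "is_cycle V E xs \<longleftrightarrow> is_path V E xs \<and> length xs \<ge> 3 \<and> {last xs, hd xs} \<in> E"

definition tree :: "'a set \<Rightarrow> 'a set set \<Rightarrow> bool" where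
  "tree V E \<longleftrightarrow> graph V E \<and> V \<noteq> {} \<and> connected V E \<and> (\<nexists>xs. is_cycle V E xs)"

definition path_cover :: "'a set \<Rightarrow> 'a set set \<Rightarrow> 'a list set \<Rightarrow> bool" where
  "path_cover V E P \<longleftrightarrow> (\<forall>p\<in>P. is_path V E p) \<and>
     (\<forall>p\<in>P. \<forall>q\<in>P. p \<noteq> q \<longrightarrow> set p \<inter> set q = {}) \<and>
     (\<Union>p\<in>P. set p) = V"

definition min_path_cover :: "'a set \<Rightarrow> 'a set set \<Rightarrow> 'a list set \<Rightarrow> bool" where
  "min_path_cover V E P \<longleftrightarrow> path_cover V E P \<and> finite P \<and>
     (\<forall>Q. path_cover V E Q \<and> finite Q \<longrightarrow> card P \<le> card Q)"

definition connector_edge :: "'a set set \<Rightarrow> 'a list set \<Rightarrow> 'a \<Rightarrow> 'a \<Rightarrow> bool" where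
  "connector_edge E P x y \<longleftrightarrow> {x, y} \<in> E \<and>
     (\<exists>p\<in>P. \<exists>q\<in>P. p \<noteq> q \<and> x \<in> set p \<and> y \<in> set q)"

definition connector_vertex :: "'a set set \<Rightarrow> 'a list set \<Rightarrow> 'a \<Rightarrow> bool" where
  "connector_vertex E P x \<longleftrightarrow> (\<exists>y. connector_edge E P x y \<or> connector_edge E P y x)"

definition interior_connector :: "'a set set \<Rightarrow> 'a list set \<Rightarrow> 'a \<Rightarrow> bool" where
  "interior_connector E P x \<longleftrightarrow> connector_vertex E P x \<and>
     (\<exists>p\<in>P. x \<in> set p \<and> x \<noteq> hd p \<and> x \<noteq> last p)"

end

theory Submission
  imports Defs
begin

text \<open>If both ends of a connector edge \<open>xy\<close> were ends of their paths \<open>p \<ni> x\<close> and \<open>q \<ni> y\<close>,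
  then orienting \<open>p\<close> to end in \<open>x\<close> and \<open>q\<close> to start in \<open>y\<close> and joining them along \<open>xy\<close> would
  replace two paths of the cover by one, contradicting minimality. The argument never uses
  that the graph is a tree.\<close>

lemma is_path_rev:
  assumes "is_path V E xs" shows "is_path V E (rev xs)"
  unfolding is_path_def
proof (intro conjI allI impI)
  show "rev xs \<noteq> []" "distinct (rev xs)" "set (rev xs) \<subseteq> V"
    using assms by (auto simp: is_path_def)
  fix i assume i: "Suc i < length (rev xs)"
  let ?j = "length xs - Suc (Suc i)"
  have "{xs ! ?j, xs ! Suc ?j} \<in> E" using assms i by (auto simp: is_path_def)
  moreover have "rev xs ! i = xs ! Suc ?j" "rev xs ! Suc i = xs ! ?j"
    using i by (auto simp: rev_nth Suc_diff_Suc)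
  ultimately show "{rev xs ! i, rev xs ! Suc i} \<in> E" by (simp add: insert_commute)
qed

lemma is_path_append:
  assumes a: "is_path V E a" and b: "is_path V E b" and disj: "set a \<inter> set b = {}"
    and join: "{last a, hd b} \<in> E"
  shows "is_path V E (a @ b)"
  unfolding is_path_def
proof (intro conjI allI impI)
  show "a @ b \<noteq> []" "distinct (a @ b)" "set (a @ b) \<subseteq> V"
    using a b disj by (auto simp: is_path_def)
  fix i assume i: "Suc i < length (a @ b)"
  consider "Suc i < length a" | "Suc i = length a" | "length a \<le> i" by linarith
  then show "{(a @ b) ! i, (a @ b) ! Suc i} \<in> E"
  proof cases
    case 1
    then show ?thesis using a by (auto simp: is_path_def nth_append)
  next
    case 2
    have "a ! i = last a"
      using 2 a by (simp add: last_conv_nth is_path_def del: Suc_eq_plus1 flip: 2)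
    moreover have "b ! 0 = hd b" using b by (simp add: hd_conv_nth is_path_def)
    ultimately show ?thesis using 2 join by (simp add: nth_append)
  next
    case 3
    then have "Suc (i - length a) < length b" "Suc i - length a = Suc (i - length a)"
      using i by auto
    then show ?thesis using 3 b by (auto simp: is_path_def nth_append)
  qed
qed

lemma is_path_end_last:
  assumes "is_path V E p" and "x = hd p \<or> x = last p"
  obtains p' where "is_path V E p'" "set p' = set p" "last p' = x"
proof (cases "x = last p")
  case True
  then show ?thesis using that assms(1) by blast
next
  case False
  have "p \<noteq> []" using assms(1) by (simp add: is_path_def)
  then show ?thesis
    using False assms that[of "rev p"] is_path_rev by (auto simp: last_rev)
qed

lemma is_path_end_hd:
  assumes "is_path V E q" and "y = hd q \<or> y = last q"
  obtains q' where "is_path V E q'" "set q' = set q" "hd q' = y"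
proof -
  obtain q' where "is_path V E q'" "set q' = set q" "last q' = y"
    using is_path_end_last assms by metis
  moreover have "q' \<noteq> []" using \<open>is_path V E q'\<close> by (simp add: is_path_def)
  ultimately show ?thesis using that[of "rev q'"] is_path_rev[of V E q'] by (simp add: hd_rev)
qed

lemma path_cover_merge:
  assumes cover: "path_cover V E P" and pq: "p \<in> P" "q \<in> P"
    and r: "is_path V E r" "set r = set p \<union> set q"
  shows "path_cover V E (insert r (P - {p, q}))"
  unfolding path_cover_def
proof (intro conjI ballI impI)
  have disj: "\<And>s t. s \<in> P \<Longrightarrow> t \<in> P \<Longrightarrow> s \<noteq> t \<Longrightarrow> set s \<inter> set t = {}"
    using cover by (auto simp: path_cover_def)
  fix s t assume "s \<in> insert r (P - {p, q})" "t \<in> insert r (P - {p, q})" "s \<noteq> t"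
  then show "set s \<inter> set t = {}"
    using disj[of s t] disj[of s p] disj[of s q] disj[of t p] disj[of t q] pq r by auto
qed (use cover pq r in \<open>auto simp: path_cover_def\<close>)

lemma card_insert_Diff_two_less:
  assumes "finite P" "p \<in> P" "q \<in> P" "p \<noteq> q"
  shows "card (insert r (P - {p, q})) < card P"
proof -
  have "card {p, q} \<le> card P" using assms by (intro card_mono) auto
  then have "card (P - {p, q}) + 2 = card P"
    using assms by (simp add: card_Diff_subset)
  moreover have "card (insert r (P - {p, q})) \<le> Suc (card (P - {p, q}))"
    using assms(1) by (simp add: card_insert_if)
  ultimately show ?thesis by linarith
qed

lemma min_path_cover_no_edge_between_ends:
  assumes "min_path_cover V E P" and pq: "p \<in> P" "q \<in> P" "p \<noteq> q"
    and "x = hd p \<or> x = last p" and "y = hd q \<or> y = last q" and "{x, y} \<in> E"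
  shows False
proof -
  have cover: "path_cover V E P" and "finite P"
    and minimal: "\<And>Q. path_cover V E Q \<Longrightarrow> finite Q \<Longrightarrow> card P \<le> card Q"
    using assms(1) by (auto simp: min_path_cover_def)
  have "is_path V E p" "is_path V E q" and disj: "set p \<inter> set q = {}"
    using cover pq by (auto simp: path_cover_def)
  obtain p' where p': "is_path V E p'" "set p' = set p" "last p' = x"
    using is_path_end_last \<open>is_path V E p\<close> assms(5) by metis
  obtain q' where q': "is_path V E q'" "set q' = set q" "hd q' = y"
    using is_path_end_hd \<open>is_path V E q\<close> assms(6) by metis
  have "is_path V E (p' @ q')"
    using is_path_append[OF p'(1) q'(1)] p' q' disj assms(7) by simp
  then have "path_cover V E (insert (p' @ q') (P - {p, q}))"
    using path_cover_merge[OF cover pq(1,2)] p' q' by simp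
  then have "card P \<le> card (insert (p' @ q') (P - {p, q}))"
    using minimal \<open>finite P\<close> by simp
  with card_insert_Diff_two_less[OF \<open>finite P\<close> pq, of "p' @ q'"] show False by linarith
qed

theorem lemma3p5:
  fixes V :: "'a set" and E :: "'a set set" and P :: "'a list set" and x y :: 'a
  assumes "tree V E"
    and "min_path_cover V E P"
    and "connector_edge E P x y"
  shows "interior_connector E P x \<or> interior_connector E P y"
proof (rule ccontr)
  assume not_interior: "\<not> (interior_connector E P x \<or> interior_connector E P y)"
  obtain p q where pq: "p \<in> P" "q \<in> P" "p \<noteq> q" "x \<in> set p" "y \<in> set q" and "{x, y} \<in> E"
    using assms(3) by (auto simp: connector_edge_def)
  have "connector_vertex E P x" "connector_vertex E P y"
    using assms(3) by (auto simp: connector_vertex_def)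
  then have "x = hd p \<or> x = last p" "y = hd q \<or> y = last q"
    using not_interior pq by (auto simp: interior_connector_def)
  then show False
    using min_path_cover_no_edge_between_ends[OF assms(2) pq(1-3)] \<open>{x, y} \<in> E\<close> by blast
qed

end
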